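(* Let $\Delta\subset\mathbb{S}^2$ be a prime flag complex. If $\Delta$ contains a full subcomplex $B$ which is special, then $\Delta=B$. In particular, the 1-skeleton of $\Delta$ is $\mathcal{CFS}$ if and only if $\Delta$ is special.
   Context: A flag complex is a simplicial complex in which every complete subgraph of the 1-skeleton spans a simplex; a subcomplex $B$ is full if every simplex whose vertices lie in $B$ belongs to $B$. For a planar flag complex $\Delta\subset\mathbb{S}^2$, an induced 4-cycle $\sigma$ strongly separates $\Delta$ if $\Delta$ meets both components of $\mathbb{S}^2-\sigma$. $\Delta$ is prime if (1) it is connected with no separating vertex and no separating edge; (2) it is not a 4-cycle but contains an induced 4-cycle; (3) it has no strongly separating induced 4-cycle. A flag complex is special if it is (the flag complex of) the suspension of a graph with 3 vertices that is not a triangle, i.e. the join of such a graph with two non-adjacent vertices. For a graph $\Gamma$, $\Gamma^4$ has as vertices the induced 4-cycles, adjacent iff they share two non-adjacent vertices; $\Gamma$ is $\mathcal{CFS}$ if $\Gamma=\Omega*K$ with $K$ a possibly empty clique and $\Omega$ non-empty such that $\Omega^4$ has a component $T$ with every vertex of $\Omega$ lying in a 4-cycle that is a vertex of $T$. *)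

theory Defs
  imports "HOL-Analysis.Analysis"
begin

text \<open>A flag complex is represented by its 1-skeleton: a finite simple graph with
vertex set V (a subset of a finite type 'v) and symmetric irreflexive edge relation E.
Its simplices are the nonempty cliques.\<close>

definition simple_graph :: "'v set \<Rightarrow> ('v \<Rightarrow> 'v \<Rightarrow> bool) \<Rightarrow> bool" where
  "simple_graph V E \<longleftrightarrow> (\<forall>u v. E u v \<longrightarrow> u \<in> V \<and> v \<in> V \<and> u \<noteq> v \<and> E v u)"

definition clique :: "('v \<Rightarrow> 'v \<Rightarrow> bool) \<Rightarrow> 'v set \<Rightarrow> bool" where
  "clique E S \<longleftrightarrow> (\<forall>u\<in>S. \<forall>v\<in>S. u \<noteq> v \<longrightarrow> E u v)"

text \<open>Geometric realization of the flag complex of (V,E), as a subset of real^'v: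
barycentric coordinate vectors whose support is a (nonempty) clique of vertices in V.\<close>

definition realization :: "('v::finite) set \<Rightarrow> ('v \<Rightarrow> 'v \<Rightarrow> bool) \<Rightarrow> (real^'v) set" where
  "realization V E = {x. (\<forall>i. 0 \<le> x $ i) \<and> (\<Sum>i\<in>UNIV. x $ i) = 1 \<and>
      {i. x $ i \<noteq> 0} \<subseteq> V \<and> clique E {i. x $ i \<noteq> 0}}"

definition full_realization :: "('v::finite) set \<Rightarrow> ('v \<Rightarrow> 'v \<Rightarrow> bool) \<Rightarrow> 'v set \<Rightarrow> (real^'v) set" where
  "full_realization V E W = {x \<in> realization V E. \<forall>i. x $ i \<noteq> 0 \<longrightarrow> i \<in> W}"

definition sphere_embedding :: "('v::finite) set \<Rightarrow> ('v \<Rightarrow> 'v \<Rightarrow> bool) \<Rightarrow> (real^'v \<Rightarrow> real^3) \<Rightarrow> bool" where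
  "sphere_embedding V E h \<longleftrightarrow> continuous_on (realization V E) h \<and> inj_on h (realization V E) \<and>
      h ` realization V E \<subseteq> sphere 0 1"

text \<open>Induced 4-cycle, given by its vertex set (an induced cycle is determined by its vertices).\<close>

definition induced_4cycle :: "('v \<Rightarrow> 'v \<Rightarrow> bool) \<Rightarrow> 'v set \<Rightarrow> bool" where
  "induced_4cycle E C \<longleftrightarrow> (\<exists>a b c d. C = {a, b, c, d} \<and> distinct [a, b, c, d] \<and>
      E a b \<and> E b c \<and> E c d \<and> E d a \<and> \<not> E a c \<and> \<not> E b d)"

definition graph_connected :: "'v set \<Rightarrow> ('v \<Rightarrow> 'v \<Rightarrow> bool) \<Rightarrow> bool" where
  "graph_connected W E \<longleftrightarrow>
     (\<forall>u\<in>W. \<forall>v\<in>W. (\<lambda>x y. x \<in> W \<and> y \<in> W \<and> E x y)\<^sup>*\<^sup>* u v)"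

definition strongly_separates ::
  "('v::finite) set \<Rightarrow> ('v \<Rightarrow> 'v \<Rightarrow> bool) \<Rightarrow> (real^'v \<Rightarrow> real^3) \<Rightarrow> 'v set \<Rightarrow> bool" where
  "strongly_separates V E h C \<longleftrightarrow>
     (let S = sphere 0 1 - h ` full_realization V E C in
      \<exists>x \<in> h ` realization V E \<inter> S. \<exists>y \<in> h ` realization V E \<inter> S.
         \<not> connected_component S x y)"

definition prime_complex ::
  "('v::finite) set \<Rightarrow> ('v \<Rightarrow> 'v \<Rightarrow> bool) \<Rightarrow> (real^'v \<Rightarrow> real^3) \<Rightarrow> bool" where
  "prime_complex V E h \<longleftrightarrow>
     graph_connected V E \<and>
     (\<forall>v\<in>V. graph_connected (V - {v}) E) \<and>
     (\<forall>u v. E u v \<longrightarrow> graph_connected (V - {u, v}) E) \<and>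
     \<not> induced_4cycle E V \<and>
     (\<exists>C. C \<subseteq> V \<and> induced_4cycle E C) \<and>
     \<not> (\<exists>C. C \<subseteq> V \<and> induced_4cycle E C \<and> strongly_separates V E h C)"

text \<open>Special: the flag complex on W is the suspension of a 3-vertex graph that is not a
triangle (join with two non-adjacent vertices a, b).\<close>

definition special :: "'v set \<Rightarrow> ('v \<Rightarrow> 'v \<Rightarrow> bool) \<Rightarrow> bool" where
  "special W E \<longleftrightarrow> (\<exists>a b c1 c2 c3. W = {a, b, c1, c2, c3} \<and> distinct [a, b, c1, c2, c3] \<and>
      \<not> E a b \<and> (\<forall>c\<in>{c1, c2, c3}. E a c \<and> E b c) \<and> \<not> (E c1 c2 \<and> E c2 c3 \<and> E c1 c3))"

definition adj4 :: "'v set \<Rightarrow> ('v \<Rightarrow> 'v \<Rightarrow> bool) \<Rightarrow> 'v set \<Rightarrow> 'v set \<Rightarrow> bool" where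
  "adj4 \<Omega> E C D \<longleftrightarrow> C \<subseteq> \<Omega> \<and> D \<subseteq> \<Omega> \<and> induced_4cycle E C \<and> induced_4cycle E D \<and> C \<noteq> D \<and>
      (\<exists>x y. x \<in> C \<inter> D \<and> y \<in> C \<inter> D \<and> x \<noteq> y \<and> \<not> E x y)"

definition CFS :: "'v set \<Rightarrow> ('v \<Rightarrow> 'v \<Rightarrow> bool) \<Rightarrow> bool" where
  "CFS V E \<longleftrightarrow> (\<exists>\<Omega> K. \<Omega> \<union> K = V \<and> \<Omega> \<inter> K = {} \<and> \<Omega> \<noteq> {} \<and> clique E K \<and>
      (\<forall>u\<in>\<Omega>. \<forall>k\<in>K. E u k) \<and>
      (\<exists>C0. C0 \<subseteq> \<Omega> \<and> induced_4cycle E C0 \<and>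
         (\<forall>v\<in>\<Omega>. \<exists>C. (adj4 \<Omega> E)\<^sup>*\<^sup>* C0 C \<and> v \<in> C)))"

end

theory Submission
  imports Defs
begin

text \<open>Let W = {a, b, c1, c2, c3} be special with c1 c2 not an edge, and suppose some vertex v lies
  outside W. The square a c1 b c2 is induced, so by primeness the rest of the complex lies in one
  face of its image on the sphere. Projecting the sphere to the plane from a point of the other
  face puts c3 and v inside the image of the square. The arc a c3 b splits that face into the faces
  of the squares a c1 b c3 and a c2 b c3; v lies in one of them, say the first, and c2 does not.
  If c1 c3 is an edge, the triangles a c1 c3 and b c1 c3 fill the first square, and by invariance of
  domain no vertex lies inside it; otherwise that square is induced and separates v from c2.
  Finally, special graphs are CFS, and a CFS graph that is not a square contains a special
  subgraph, which must then be everything.\<close>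

definition vertex_point :: "'v::finite \<Rightarrow> real^'v" where
  "vertex_point x = (\<chi> i. if i = x then 1 else 0)"

definition coord_support :: "real^'v::finite \<Rightarrow> 'v set" where
  "coord_support z = {i. z $ i \<noteq> 0}"

lemma vertex_point_nth [simp]: "vertex_point x $ i = (if i = x then 1 else 0)"
  by (simp add: vertex_point_def)

lemma vertex_point_eq_iff [simp]: "vertex_point x = vertex_point y \<longleftrightarrow> x = y"
  by (metis vertex_point_nth zero_neq_one)

lemma coord_support_vertex_point [simp]: "coord_support (vertex_point x) = {x}"
  by (auto simp: coord_support_def)

lemma sum_coords_eq_sum_over_superset_of_support:
  fixes z :: "real^'v::finite"
  assumes "coord_support z \<subseteq> S"
  shows "(\<Sum>i\<in>UNIV. z $ i) = (\<Sum>i\<in>S. z $ i)"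
  by (rule sum.mono_neutral_right) (use assms in \<open>auto simp: coord_support_def\<close>)

lemma eq_vertex_point_if_coord_support_subset:
  fixes z :: "real^'v::finite"
  assumes "(\<Sum>i\<in>UNIV. z $ i) = 1" "coord_support z \<subseteq> {w}"
  shows "z = vertex_point w"
  using assms sum_coords_eq_sum_over_superset_of_support[OF assms(2)]
  by (auto simp: vec_eq_iff coord_support_def)

lemma closed_segment_vertex_points_iff:
  fixes z :: "real^'v::finite"
  shows "z \<in> closed_segment (vertex_point p) (vertex_point q) \<longleftrightarrow>
         (\<forall>i. 0 \<le> z $ i) \<and> (\<Sum>i\<in>UNIV. z $ i) = 1 \<and> coord_support z \<subseteq> {p, q}"
    (is "?seg \<longleftrightarrow> ?simplex")
proof
  assume ?seg
  then obtain t where t: "0 \<le> t" "t \<le> 1"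
    and z: "z = (1 - t) *\<^sub>R vertex_point p + t *\<^sub>R vertex_point q"
    by (auto simp: closed_segment_def)
  have zi: "z $ i = (if i = p then 1 - t else 0) + (if i = q then t else 0)" for i
    by (simp add: z)
  have "(\<Sum>i\<in>UNIV. z $ i) = 1"
    by (simp add: zi sum.distrib)
  then show ?simplex
    using t by (auto simp: zi coord_support_def split: if_splits)
next
  assume ?simplex
  then have nonneg: "\<forall>i. 0 \<le> z $ i" and sum1: "(\<Sum>i\<in>UNIV. z $ i) = 1"
    and supp: "coord_support z \<subseteq> {p, q}" by auto
  show ?seg
  proof (cases "p = q")
    case True
    then show ?thesis
      using eq_vertex_point_if_coord_support_subset[OF sum1] supp by simp
  next
    case False
    have pq: "z $ p + z $ q = 1"
      using sum1 sum_coords_eq_sum_over_superset_of_support[OF supp] False by simp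
    have "z = (1 - z $ q) *\<^sub>R vertex_point p + z $ q *\<^sub>R vertex_point q"
      using supp pq False by (auto simp: vec_eq_iff coord_support_def)
    moreover have "0 \<le> z $ q" "z $ q \<le> 1"
      using nonneg[rule_format, of p] nonneg[rule_format, of q] pq by linarith+
    ultimately show ?thesis
      by (auto simp: closed_segment_def)
  qed
qed

lemma closed_segments_Int_subset_vertex_point:
  fixes w :: "'v::finite"
  assumes "z \<in> closed_segment (vertex_point p) (vertex_point q)"
    and "z \<in> closed_segment (vertex_point r) (vertex_point s)"
    and "{p, q} \<inter> {r, s} \<subseteq> {w}"
  shows "z = vertex_point w"
  using assms unfolding closed_segment_vertex_points_iff
  by (intro eq_vertex_point_if_coord_support_subset) auto

lemma realization_iff:
  "z \<in> realization V E \<longleftrightarrow>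
     (\<forall>i. 0 \<le> z $ i) \<and> (\<Sum>i\<in>UNIV. z $ i) = 1 \<and> coord_support z \<subseteq> V \<and> clique E (coord_support z)"
  by (simp add: realization_def coord_support_def)

lemma clique_subset: "clique E T \<Longrightarrow> S \<subseteq> T \<Longrightarrow> clique E S"
  by (auto simp: clique_def)

lemma vertex_point_in_realization: "x \<in> V \<Longrightarrow> vertex_point x \<in> realization V E"
  by (auto simp: realization_iff clique_def)

lemma closed_segment_subset_realization:
  assumes "simple_graph V E" "E p q"
  shows "closed_segment (vertex_point p) (vertex_point q) \<subseteq> realization V E"
proof
  fix z assume "z \<in> closed_segment (vertex_point p) (vertex_point q)"
  moreover have "p \<in> V" "q \<in> V" "E q p"
    using assms by (auto simp: simple_graph_def)
  ultimately show "z \<in> realization V E"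
    using assms(2) by (auto simp: realization_iff closed_segment_vertex_points_iff clique_def)
qed

definition two_edges :: "'v::finite \<Rightarrow> 'v \<Rightarrow> 'v \<Rightarrow> (real^'v) set" where
  "two_edges a c b =
     closed_segment (vertex_point a) (vertex_point c) \<union> closed_segment (vertex_point c) (vertex_point b)"

definition two_edge_arc :: "'v::finite \<Rightarrow> 'v \<Rightarrow> 'v \<Rightarrow> real \<Rightarrow> real^'v" where
  "two_edge_arc a c b = linepath (vertex_point a) (vertex_point c) +++ linepath (vertex_point c) (vertex_point b)"

definition square_loop :: "'v::finite \<Rightarrow> 'v \<Rightarrow> 'v \<Rightarrow> 'v \<Rightarrow> real \<Rightarrow> real^'v" where
  "square_loop a u b w = two_edge_arc a u b +++ reversepath (two_edge_arc a w b)"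

lemma two_edge_arc_ends [simp]:
  "pathstart (two_edge_arc a c b) = vertex_point a" "pathfinish (two_edge_arc a c b) = vertex_point b"
  by (simp_all add: two_edge_arc_def)

lemma path_image_two_edge_arc [simp]: "path_image (two_edge_arc a c b) = two_edges a c b"
  by (simp add: two_edge_arc_def two_edges_def path_image_join)

lemma arc_two_edge_arc:
  assumes "distinct [a, c, b]"
  shows "arc (two_edge_arc a c b)"
proof -
  have "closed_segment (vertex_point a) (vertex_point c) \<inter> closed_segment (vertex_point c) (vertex_point b)
          \<subseteq> {vertex_point c}"
    using assms closed_segments_Int_subset_vertex_point[of _ a c c b c] by auto
  then show ?thesis
    using assms unfolding two_edge_arc_def by (intro arc_join) auto
qed

lemma vertex_points_in_two_edges [simp]:
  "vertex_point a \<in> two_edges a c b" "vertex_point c \<in> two_edges a c b" "vertex_point b \<in> two_edges a c b"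
  by (simp_all add: two_edges_def)

lemma vertex_point_in_two_edges_iff: "vertex_point v \<in> two_edges a c b \<longleftrightarrow> v \<in> {a, c, b}"
  by (auto simp: two_edges_def closed_segment_vertex_points_iff)

lemma square_avoids_diagonal:
  assumes "distinct [a, u, b, w]" "z \<in> two_edges a u b \<union> two_edges a w b"
  shows "z $ u = 0 \<or> z $ w = 0"
  using assms by (auto simp: two_edges_def closed_segment_vertex_points_iff coord_support_def)

lemma compact_two_edges: "compact (two_edges a c b)"
  unfolding two_edges_def by (intro compact_Un compact_segment)

lemma two_edges_Int:
  assumes "distinct [a, b, u, w]"
  shows "two_edges a u b \<inter> two_edges a w b = {vertex_point a, vertex_point b}"
proof
  show "two_edges a u b \<inter> two_edges a w b \<subseteq> {vertex_point a, vertex_point b}"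
    using assms closed_segments_Int_subset_vertex_point[of _ a u a w a]
      closed_segments_Int_subset_vertex_point[of _ a u w b a]
      closed_segments_Int_subset_vertex_point[of _ u b a w b]
      closed_segments_Int_subset_vertex_point[of _ u b w b b]
    unfolding two_edges_def by auto
qed simp

lemma simple_path_square_loop:
  assumes "distinct [a, b, u, w]"
  shows "simple_path (square_loop a u b w)"
  unfolding square_loop_def using assms two_edges_Int[OF assms]
  by (subst simple_path_join_loop_eq) (auto simp: arc_reversepath arc_two_edge_arc)

lemma square_loop_closed: "pathfinish (square_loop a u b w) = pathstart (square_loop a u b w)"
  by (simp add: square_loop_def)

lemma path_image_square_loop: "path_image (square_loop a u b w) = two_edges a u b \<union> two_edges a w b"
  by (simp add: square_loop_def path_image_join)

lemma two_edges_subset_realization: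
  assumes "simple_graph V E" "E a c" "E c b"
  shows "two_edges a c b \<subseteq> realization V E"
  unfolding two_edges_def using closed_segment_subset_realization[OF assms(1)] assms(2,3) by blast

lemma full_realization_square:
  assumes graph: "simple_graph V E" and "distinct [a, u, b, w]"
    and edges: "E a u" "E u b" "E b w" "E w a" and diagonals: "\<not> E a b" "\<not> E u w"
  shows "full_realization V E {a, u, b, w} = two_edges a u b \<union> two_edges a w b"
proof
  have sym: "E x y \<Longrightarrow> E y x" for x y
    using graph by (auto simp: simple_graph_def)
  show "full_realization V E {a, u, b, w} \<subseteq> two_edges a u b \<union> two_edges a w b"
  proof
    fix z assume "z \<in> full_realization V E {a, u, b, w}"
    then have z: "\<forall>i. 0 \<le> z $ i" "(\<Sum>i\<in>UNIV. z $ i) = 1" "clique E (coord_support z)"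
      and supp: "coord_support z \<subseteq> {a, u, b, w}"
      by (auto simp: full_realization_def realization_iff coord_support_def)
    have "\<not> {a, b} \<subseteq> coord_support z" "\<not> {u, w} \<subseteq> coord_support z"
      using z(3) diagonals assms(2) by (auto simp: clique_def)
    then have "coord_support z \<subseteq> {a, u} \<or> coord_support z \<subseteq> {u, b} \<or>
               coord_support z \<subseteq> {a, w} \<or> coord_support z \<subseteq> {w, b}"
      using supp by blast
    then show "z \<in> two_edges a u b \<union> two_edges a w b"
      using z by (auto simp: two_edges_def closed_segment_vertex_points_iff)
  qed
  show "two_edges a u b \<union> two_edges a w b \<subseteq> full_realization V E {a, u, b, w}"
    using two_edges_subset_realization[OF graph edges(1,2)]
      two_edges_subset_realization[OF graph sym[OF edges(4)] sym[OF edges(3)]]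
    by (auto simp: full_realization_def two_edges_def closed_segment_vertex_points_iff coord_support_def)
qed

section \<open>Curves on the sphere\<close>

lemma arc_continuous_image:
  assumes "arc g" "continuous_on (path_image g) f" "inj_on f (path_image g)"
  shows "arc (f \<circ> g)"
  using assms unfolding arc_def
  by (auto intro: path_continuous_image comp_inj_on simp: path_image_def)

lemma punctured_sphere_homeomorphic_complex:
  assumes "p \<in> sphere (0::real^3) 1"
  obtains \<phi> :: "real^3 \<Rightarrow> complex" and \<psi> where "homeomorphism (sphere 0 1 - {p}) UNIV \<phi> \<psi>"
proof -
  have "(sphere (0::real^3) 1 - {p}) homeomorphic {x::real^3. axis 1 1 \<bullet> x = 0}"
    by (rule homeomorphic_punctured_sphere_hyperplane) (use assms in auto)
  also have "\<dots> homeomorphic (UNIV::complex set)"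
  proof -
    have "aff_dim {x::real^3. axis 1 1 \<bullet> x = 0} = 2"
      by (subst aff_dim_hyperplane) auto
    then show ?thesis
      by (subst homeomorphic_affine_sets_eq) (auto simp: affine_hyperplane)
  qed
  finally show ?thesis
    using that by (auto simp: homeomorphic_def)
qed

lemma connected_disjoint_or_subset_open:
  assumes "connected X" "open A" "closure A \<inter> X \<subseteq> A"
  shows "X \<inter> A = {} \<or> X \<subseteq> A"
proof -
  have "A \<inter> X = {} \<or> (- closure A) \<inter> X = {}"
    by (rule connectedD[OF assms(1,2), of "- closure A"]) (use assms closure_subset in auto)
  then show ?thesis
    using assms(3) by auto
qed

text \<open>The set \<psi> ` inside (\<phi> ` J) is open in the sphere, and its closure adds only points of J,
  so it is clopen in the complement of J.\<close>

lemma not_connected_component_across_inside: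
  fixes \<phi> :: "real^3 \<Rightarrow> complex"
  assumes hom: "homeomorphism (sphere 0 1 - {p}) UNIV \<phi> \<psi>"
    and J: "J \<subseteq> sphere 0 1 - {p}" "compact (\<phi> ` J)"
    and y: "y \<in> sphere 0 1 - {p}" "\<phi> y \<in> inside (\<phi> ` J)"
    and x: "x \<in> sphere 0 1 - J" "x \<notin> \<psi> ` inside (\<phi> ` J)"
  shows "\<not> connected_component (sphere 0 1 - J) y x"
proof
  assume "connected_component (sphere 0 1 - J) y x"
  then obtain T where T: "connected T" "T \<subseteq> sphere 0 1 - J" "y \<in> T" "x \<in> T"
    by (auto simp: connected_component_def)
  let ?I = "inside (\<phi> ` J)"
  let ?Q = "\<psi> ` ?I"
  have contpsi: "continuous_on UNIV \<psi>" and psi_image: "\<psi> ` UNIV = sphere 0 1 - {p}"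
    and psi_phi: "\<And>z. z \<in> sphere 0 1 - {p} \<Longrightarrow> \<psi> (\<phi> z) = z"
    using hom by (auto simp: homeomorphism_def)
  have "openin (top_of_set (sphere 0 1 - {p})) ?Q"
    using homeomorphism_symD[OF hom]
    by (rule homeomorphism_imp_open_map) (simp add: open_inside compact_imp_closed J(2))
  then obtain A where A: "open A" "?Q = (sphere 0 1 - {p}) \<inter> A"
    by (auto simp: openin_open)
  define C where "C = \<psi> ` closure ?I"
  have "compact C"
    unfolding C_def using J(2)
    by (intro compact_continuous_image continuous_on_subset[OF contpsi])
       (auto simp: bounded_inside compact_imp_bounded)
  have QC: "?Q \<subseteq> C"
    unfolding C_def using closure_subset[of ?I] by (rule image_mono)
  have "C \<subseteq> \<psi> ` (?I \<union> \<phi> ` J)"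
    unfolding C_def using closure_inside_subset[of "\<phi> ` J"] J(2) compact_imp_closed by blast
  also have "\<dots> = ?Q \<union> J"
    using J(1) psi_phi by (force simp: image_Un image_image)
  finally have CQJ: "C \<subseteq> ?Q \<union> J" .
  have "(A - {p}) \<inter> T = {} \<or> (- C) \<inter> T = {}"
  proof (rule connectedD[OF T(1)])
    show "open (A - {p})" "open (- C)"
      using A(1) \<open>compact C\<close> by (auto intro: open_delete compact_imp_closed)
    show "T \<subseteq> (A - {p}) \<union> - C"
      using CQJ T(2) A(2) by blast
    show "(A - {p}) \<inter> - C \<inter> T = {}"
      using T(2) A(2) QC by blast
  qed
  moreover have "y \<in> (A - {p}) \<inter> T"
    using y psi_phi[of y] A(2) T(3) by (metis Diff_iff IntD2 IntI image_eqI)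
  moreover have "x \<in> (- C) \<inter> T"
    using CQJ x T(4) by blast
  ultimately show False
    by blast
qed

text \<open>The point p is the image of \<infinity> under \<psi>, so it lies in the closure of the image of any
  unbounded set.\<close>

lemma connected_insert_pole:
  fixes \<phi> :: "real^3 \<Rightarrow> complex"
  assumes hom: "homeomorphism (sphere 0 1 - {p}) UNIV \<phi> \<psi>"
    and U: "connected U" "\<not> bounded U"
  shows "connected (insert p (\<psi> ` U))"
proof -
  have contpsi: "continuous_on UNIV \<psi>" and psi_image: "\<psi> ` UNIV = sphere 0 1 - {p}"
    and phi_psi: "\<And>z. \<phi> (\<psi> z) = z" and contphi: "continuous_on (sphere 0 1 - {p}) \<phi>"
    using hom by (auto simp: homeomorphism_def)
  have p: "p \<in> closure (\<psi> ` U)"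
  proof (rule ccontr)
    assume "p \<notin> closure (\<psi> ` U)"
    then obtain e where "e > 0" and e: "\<forall>y\<in>\<psi> ` U. e \<le> dist y p"
      by (auto simp: closure_approachable not_less)
    define K where "K = sphere (0::real^3) 1 - ball p e"
    have KS: "K \<subseteq> sphere 0 1 - {p}"
      unfolding K_def using \<open>e > 0\<close> by auto
    have "\<psi> ` U \<subseteq> K"
      unfolding K_def using psi_image e by (auto simp: dist_commute)
    moreover have "U = \<phi> ` \<psi> ` U"
      by (simp add: image_image phi_psi)
    ultimately have "U \<subseteq> \<phi> ` K"
      by (metis image_mono)
    moreover have "compact (\<phi> ` K)"
      using KS by (intro compact_continuous_image continuous_on_subset[OF contphi])
        (auto simp: K_def compact_diff)
    ultimately show False
      using U(2) compact_imp_bounded bounded_subset by blast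
  qed
  have "connected (\<psi> ` U)"
    by (rule connected_continuous_image[OF continuous_on_subset[OF contpsi subset_UNIV] U(1)])
  moreover have "insert p (\<psi> ` U) \<subseteq> closure (\<psi> ` U)"
    using p closure_subset[of "\<psi> ` U"] by simp
  ultimately show ?thesis
    by (rule connected_intermediate_closure[OF _ subset_insertI])
qed

lemma connected_component_pole_if_outside:
  fixes \<phi> :: "real^3 \<Rightarrow> complex"
  assumes hom: "homeomorphism (sphere 0 1 - {p}) UNIV \<phi> \<psi>" and p: "p \<in> sphere 0 1"
    and J: "J \<subseteq> sphere 0 1 - {p}" "compact (\<phi> ` J)"
    and x: "x \<in> sphere 0 1 - {p}" "\<phi> x \<in> outside (\<phi> ` J)"
  shows "connected_component (sphere 0 1 - J) x p"
proof -
  have psi_image: "\<psi> ` UNIV = sphere 0 1 - {p}" and phi_psi: "\<And>z. \<phi> (\<psi> z) = z"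
    and psi_phi: "\<psi> (\<phi> x) = x"
    using hom x(1) by (auto simp: homeomorphism_def)
  define T where "T = insert p (\<psi> ` outside (\<phi> ` J))"
  have "connected T"
    unfolding T_def using J(2)
    by (intro connected_insert_pole[OF hom] connected_outside unbounded_outside compact_imp_bounded) auto
  moreover have "\<psi> ` outside (\<phi> ` J) \<subseteq> sphere 0 1 - J"
  proof
    fix t assume "t \<in> \<psi> ` outside (\<phi> ` J)"
    then obtain s where s: "s \<in> outside (\<phi> ` J)" "t = \<psi> s"
      by blast
    moreover have "s \<notin> \<phi> ` J"
      using s(1) outside_no_overlap[of "\<phi> ` J"] by blast
    ultimately have "\<phi> t \<notin> \<phi> ` J"
      by (simp add: phi_psi)
    then show "t \<in> sphere 0 1 - J"
      using psi_image s(2) by blast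
  qed
  then have "T \<subseteq> sphere 0 1 - J"
    unfolding T_def using J(1) p by blast
  moreover have "x \<in> T" "p \<in> T"
    unfolding T_def using image_eqI[of x \<psi>, OF psi_phi[symmetric] x(2)] by simp_all
  ultimately show ?thesis
    unfolding connected_component_def by blast
qed

lemma exists_point_separated_on_sphere:
  fixes g :: "real \<Rightarrow> real^3"
  assumes g: "simple_path g" "pathfinish g = pathstart g" "path_image g \<subseteq> sphere 0 1"
    and q: "q \<in> sphere 0 1 - path_image g"
  obtains p where "p \<in> sphere 0 1 - path_image g"
    "\<not> connected_component (sphere 0 1 - path_image g) p q"
proof -
  obtain \<phi> :: "real^3 \<Rightarrow> complex" and \<psi> where hom: "homeomorphism (sphere 0 1 - {q}) UNIV \<phi> \<psi>"
    using punctured_sphere_homeomorphic_complex q by blast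
  have J: "path_image g \<subseteq> sphere 0 1 - {q}"
    using g(3) q by blast
  have "continuous_on (sphere 0 1 - {q}) \<phi>" "inj_on \<phi> (sphere 0 1 - {q})"
    using hom by (auto simp: homeomorphism_def intro: inj_on_inverseI)
  then have phi: "continuous_on (path_image g) \<phi>" "inj_on \<phi> (path_image g)"
    using J by (auto intro: continuous_on_subset inj_on_subset)
  have "simple_path (\<phi> \<circ> g)"
    by (rule simple_path_continuous_image[OF g(1) phi])
  then have "inside (\<phi> ` path_image g) \<noteq> {}"
    using Jordan_inside_outside[of "\<phi> \<circ> g"] g(2)
    by (simp add: path_image_compose pathstart_compose pathfinish_compose)
  then obtain z where z: "z \<in> inside (\<phi> ` path_image g)"
    by blast
  have compact: "compact (\<phi> ` path_image g)"
    using g(1) by (intro compact_continuous_image[OF phi(1)] compact_simple_path_image)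
  have psi_image: "\<psi> ` UNIV = sphere 0 1 - {q}" and phi_psi: "\<phi> (\<psi> z) = z"
    using hom by (auto simp: homeomorphism_def)
  have psi_z: "\<psi> z \<in> sphere 0 1 - {q}" and q_off: "q \<notin> \<psi> ` inside (\<phi> ` path_image g)"
    using psi_image by blast+
  have "\<not> connected_component (sphere 0 1 - path_image g) (\<psi> z) q"
    by (rule not_connected_component_across_inside[OF hom J compact psi_z _ q q_off]) (simp add: phi_psi z)
  moreover have "\<psi> z \<notin> path_image g"
  proof
    assume "\<psi> z \<in> path_image g"
    then have "z \<in> \<phi> ` path_image g"
      using phi_psi by (metis image_eqI)
    then show False
      using z inside_no_overlap[of "\<phi> ` path_image g"] by blast
  qed
  ultimately show thesis
    using that[of "\<psi> z"] psi_z by blast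
qed

section \<open>Filling a square by two triangles\<close>

definition diamond :: "complex set" where "diamond = {z. \<bar>Re z\<bar> + \<bar>Im z\<bar> < 1}"

definition closed_diamond :: "complex set" where "closed_diamond = {z. \<bar>Re z\<bar> + \<bar>Im z\<bar> \<le> 1}"

lemma open_diamond: "open diamond"
  unfolding diamond_def by (intro open_Collect_less continuous_intros)

lemma compact_closed_diamond: "compact closed_diamond"
proof -
  have "closed closed_diamond"
    unfolding closed_diamond_def by (intro closed_Collect_le continuous_intros)
  moreover have "closed_diamond \<subseteq> cball 0 1"
  proof
    fix z assume "z \<in> closed_diamond"
    then have "cmod z \<le> 1"
      using cmod_le[of z] by (simp add: closed_diamond_def)
    then show "z \<in> cball 0 1"
      by simp
  qed
  ultimately show ?thesis
    by (meson bounded_cball bounded_subset compact_eq_bounded_closed)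
qed

lemma diamond_subset_closed_diamond: "diamond \<subseteq> closed_diamond"
  by (auto simp: diamond_def closed_diamond_def)

lemma zero_in_diamond: "0 \<in> diamond"
  by (simp add: diamond_def)

text \<open>By invariance of domain the image of the open diamond is open; its closure adds only points
  of K, so it is clopen in the connected set inside K.\<close>

lemma inside_subset_image_diamond:
  fixes g :: "complex \<Rightarrow> complex"
  assumes g: "continuous_on closed_diamond g" "inj_on g closed_diamond"
    and boundary: "g ` (closed_diamond - diamond) \<subseteq> K" and interior: "g ` diamond \<inter> K = {}"
    and K: "compact K" "connected (inside K)"
  shows "inside K \<subseteq> g ` diamond"
proof -
  have "open (g ` diamond)"
    using g diamond_subset_closed_diamond
    by (intro invariance_of_domain open_diamond) (auto intro: continuous_on_subset inj_on_subset)
  have "compact (g ` closed_diamond)"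
    by (rule compact_continuous_image[OF g(1) compact_closed_diamond])
  then have "closure (g ` diamond) \<subseteq> g ` closed_diamond"
    using diamond_subset_closed_diamond by (intro closure_minimal image_mono compact_imp_closed)
  also have "\<dots> \<subseteq> g ` diamond \<union> K"
    using boundary by blast
  finally have closure: "closure (g ` diamond) \<subseteq> g ` diamond \<union> K" .
  have bounded: "bounded (g ` diamond)"
    using \<open>compact (g ` closed_diamond)\<close> diamond_subset_closed_diamond
    by (meson bounded_subset compact_imp_bounded image_mono)
  have "outside K \<inter> g ` diamond = {} \<or> outside K \<subseteq> g ` diamond"
  proof (rule connected_disjoint_or_subset_open[OF _ \<open>open (g ` diamond)\<close>])
    show "connected (outside K)"
      using K(1) by (simp add: connected_outside compact_imp_bounded)
    show "closure (g ` diamond) \<inter> outside K \<subseteq> g ` diamond"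
      using closure outside_no_overlap[of K] by blast
  qed
  moreover have "\<not> outside K \<subseteq> g ` diamond"
    using unbounded_outside[of K] bounded_subset[OF bounded] K(1) compact_imp_bounded by blast
  ultimately have "g ` diamond \<subseteq> inside K"
    using interior inside_Un_outside[of K] by blast
  moreover have "inside K \<inter> g ` diamond = {} \<or> inside K \<subseteq> g ` diamond"
  proof (rule connected_disjoint_or_subset_open[OF K(2) \<open>open (g ` diamond)\<close>])
    show "closure (g ` diamond) \<inter> inside K \<subseteq> g ` diamond"
      using closure inside_no_overlap[of K] by blast
  qed
  ultimately show ?thesis
    using zero_in_diamond by blast
qed

text \<open>The piecewise linear map of the closed diamond onto the two triangles a u w and b u w: the
  real axis runs from a to b through the midpoint of the edge u w, and the boundary is mapped onto
  the square a u b w.\<close>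

definition diamond_point :: "'v::finite \<Rightarrow> 'v \<Rightarrow> 'v \<Rightarrow> 'v \<Rightarrow> complex \<Rightarrow> real^'v" where
  "diamond_point a u b w z =
     max 0 (- Re z) *\<^sub>R vertex_point a + max 0 (Re z) *\<^sub>R vertex_point b +
     ((1 - \<bar>Re z\<bar> - Im z) / 2) *\<^sub>R vertex_point u + ((1 - \<bar>Re z\<bar> + Im z) / 2) *\<^sub>R vertex_point w"

context
  fixes a u b w :: "'v::finite"
  assumes distinct: "distinct [a, u, b, w]"
begin

lemma diamond_point_nth:
  "diamond_point a u b w z $ a = max 0 (- Re z)" "diamond_point a u b w z $ b = max 0 (Re z)"
  "diamond_point a u b w z $ u = (1 - \<bar>Re z\<bar> - Im z) / 2"
  "diamond_point a u b w z $ w = (1 - \<bar>Re z\<bar> + Im z) / 2"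
  "i \<notin> {a, u, b, w} \<Longrightarrow> diamond_point a u b w z $ i = 0"
  using distinct by (auto simp: diamond_point_def)

lemma continuous_on_diamond_point: "continuous_on S (diamond_point a u b w)"
  unfolding diamond_point_def by (intro continuous_intros) simp_all

lemma inj_on_diamond_point: "inj_on (diamond_point a u b w) S"
proof
  fix z1 z2 assume eq: "diamond_point a u b w z1 = diamond_point a u b w z2"
  have "Re z = diamond_point a u b w z $ b - diamond_point a u b w z $ a"
    "Im z = diamond_point a u b w z $ w - diamond_point a u b w z $ u" for z
    by (simp_all add: diamond_point_nth max_def field_simps)
  then show "z1 = z2"
    using eq by (metis complex_eqI)
qed

lemma coord_support_diamond_point:
  "coord_support (diamond_point a u b w z) \<subseteq> {a, u, w} \<or> coord_support (diamond_point a u b w z) \<subseteq> {b, u, w}"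
proof -
  have "coord_support (diamond_point a u b w z) \<subseteq> {a, u, b, w}"
    using diamond_point_nth(5) by (auto simp: coord_support_def)
  moreover have "\<not> {a, b} \<subseteq> coord_support (diamond_point a u b w z)"
    by (auto simp: coord_support_def diamond_point_nth(1,2))
  ultimately show ?thesis
    by blast
qed

lemma sum_diamond_point: "(\<Sum>i\<in>UNIV. diamond_point a u b w z $ i) = 1"
proof -
  have "coord_support (diamond_point a u b w z) \<subseteq> {a, u, b, w}"
    using diamond_point_nth(5) by (auto simp: coord_support_def)
  then show ?thesis
    using distinct
    by (simp add: sum_coords_eq_sum_over_superset_of_support diamond_point_nth max_def abs_if field_simps)
qed

lemma diamond_point_nonneg: "z \<in> closed_diamond \<Longrightarrow> 0 \<le> diamond_point a u b w z $ i"
  by (cases "i \<in> {a, u, b, w}") (auto simp: diamond_point_nth closed_diamond_def)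

lemma diamond_point_in_realization:
  assumes "z \<in> closed_diamond" "simple_graph V E" "E a u" "E a w" "E u w" "E b u" "E b w"
  shows "diamond_point a u b w z \<in> realization V E"
proof -
  obtain T where T: "T = {a, u, w} \<or> T = {b, u, w}" "coord_support (diamond_point a u b w z) \<subseteq> T"
    using coord_support_diamond_point[of z] by blast
  then have "T \<subseteq> V" "clique E T"
    using assms(2-7) by (auto simp: clique_def simple_graph_def)
  then have "coord_support (diamond_point a u b w z) \<subseteq> V \<and> clique E (coord_support (diamond_point a u b w z))"
    using T(2) clique_subset by blast
  then show ?thesis
    using sum_diamond_point diamond_point_nonneg[OF assms(1)] by (simp add: realization_iff)
qed

lemma diamond_point_pos: "z \<in> diamond \<Longrightarrow> 0 < diamond_point a u b w z $ u \<and> 0 < diamond_point a u b w z $ w"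
  by (auto simp: diamond_point_nth diamond_def)

lemma diamond_point_notin_square:
  assumes "z \<in> diamond"
  shows "diamond_point a u b w z \<notin> two_edges a u b \<union> two_edges a w b"
  using diamond_point_pos[OF assms] square_avoids_diagonal[OF distinct, of "diamond_point a u b w z"] by auto

lemma diamond_point_boundary:
  assumes "z \<in> closed_diamond - diamond"
  shows "diamond_point a u b w z \<in> two_edges a u b \<union> two_edges a w b"
proof -
  have "\<bar>Re z\<bar> + \<bar>Im z\<bar> = 1"
    using assms by (auto simp: closed_diamond_def diamond_def)
  then have "diamond_point a u b w z $ u = 0 \<or> diamond_point a u b w z $ w = 0"
    by (simp add: diamond_point_nth) linarith
  then have "u \<notin> coord_support (diamond_point a u b w z) \<or> w \<notin> coord_support (diamond_point a u b w z)"
    by (auto simp: coord_support_def)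
  then have "coord_support (diamond_point a u b w z) \<subseteq> {a, u} \<or> coord_support (diamond_point a u b w z) \<subseteq> {u, b} \<or>
             coord_support (diamond_point a u b w z) \<subseteq> {a, w} \<or> coord_support (diamond_point a u b w z) \<subseteq> {w, b}"
    using coord_support_diamond_point[of z] by blast
  then show ?thesis
    using sum_diamond_point diamond_point_nonneg assms
    by (auto simp: two_edges_def closed_segment_vertex_points_iff)
qed

end

locale sphere_embedded_complex =
  fixes V :: "'v::finite set" and E :: "'v \<Rightarrow> 'v \<Rightarrow> bool" and h :: "real^'v \<Rightarrow> real^3"
  assumes graph: "simple_graph V E" and embedding: "sphere_embedding V E h"
begin

lemma edge_sym: "E x y \<Longrightarrow> E y x"
  using graph by (auto simp: simple_graph_def)

lemma continuous_on_embedding: "continuous_on (realization V E) h"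
  and inj_on_embedding: "inj_on h (realization V E)"
  and embedding_in_sphere: "h ` realization V E \<subseteq> sphere 0 1"
  using embedding by (auto simp: sphere_embedding_def)

lemma embedding_notin_image:
  assumes "r \<in> realization V E - Z" "Z \<subseteq> realization V E"
  shows "h r \<notin> h ` Z"
  using assms inj_on_image_mem_iff[OF inj_on_embedding] by blast

lemma square_subset_realization:
  assumes "E a u" "E u b" "E b w" "E w a"
  shows "two_edges a u b \<union> two_edges a w b \<subseteq> realization V E"
  using two_edges_subset_realization[OF graph assms(1,2)]
    two_edges_subset_realization[OF graph edge_sym[OF assms(4)] edge_sym[OF assms(3)]] by blast

lemma strongly_separatesI:
  assumes "distinct [a, u, b, w]"
    and edges: "E a u" "E u b" "E b w" "E w a" and diagonals: "\<not> E a b" "\<not> E u w"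
    and r: "r \<in> realization V E - (two_edges a u b \<union> two_edges a w b)"
    and s: "s \<in> realization V E - (two_edges a u b \<union> two_edges a w b)"
    and "\<not> connected_component (sphere 0 1 - h ` (two_edges a u b \<union> two_edges a w b)) (h r) (h s)"
  shows "strongly_separates V E h {a, u, b, w}"
proof -
  have "h r \<in> h ` realization V E \<inter> (sphere 0 1 - h ` (two_edges a u b \<union> two_edges a w b))"
    "h s \<in> h ` realization V E \<inter> (sphere 0 1 - h ` (two_edges a u b \<union> two_edges a w b))"
    using r s embedding_in_sphere embedding_notin_image[OF _ square_subset_realization[OF edges]] by auto
  then show ?thesis
    using assms unfolding strongly_separates_def Let_def full_realization_square[OF graph assms(1-7)]
    by blast
qed

text \<open>The rest of the complex lies in one face of the image of a non-separating square; p is taken in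
  another face, which exists by the Jordan curve theorem.\<close>

lemma exists_pole_off_complex:
  assumes "distinct [a, u, b, w]"
    and edges: "E a u" "E u b" "E b w" "E w a" and diagonals: "\<not> E a b" "\<not> E u w"
    and not_separating: "\<not> strongly_separates V E h {a, u, b, w}"
    and r0: "r0 \<in> realization V E - (two_edges a u b \<union> two_edges a w b)"
  obtains p where "p \<in> sphere 0 1" "p \<notin> h ` realization V E"
    "\<And>r. r \<in> realization V E - (two_edges a u b \<union> two_edges a w b) \<Longrightarrow>
       \<not> connected_component (sphere 0 1 - h ` (two_edges a u b \<union> two_edges a w b)) (h r) p"
proof -
  define Z where "Z = two_edges a u b \<union> two_edges a w b"
  have ZR: "Z \<subseteq> realization V E"
    unfolding Z_def by (rule square_subset_realization[OF edges])
  have simple: "simple_path (h \<circ> square_loop a u b w)"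
    using assms(1) ZR continuous_on_embedding inj_on_embedding
    by (intro simple_path_continuous_image simple_path_square_loop)
       (auto simp: path_image_square_loop Z_def intro: continuous_on_subset inj_on_subset)
  have closed: "pathfinish (h \<circ> square_loop a u b w) = pathstart (h \<circ> square_loop a u b w)"
    by (simp add: pathstart_compose pathfinish_compose square_loop_closed)
  have image: "path_image (h \<circ> square_loop a u b w) = h ` Z"
    by (simp add: path_image_compose path_image_square_loop Z_def)
  have on_sphere: "h ` Z \<subseteq> sphere 0 1"
    using ZR embedding_in_sphere by blast
  have "h r0 \<in> sphere 0 1 - h ` Z"
    using r0 embedding_in_sphere embedding_notin_image[OF _ ZR] by (auto simp: Z_def)
  then obtain p where p: "p \<in> sphere 0 1 - h ` Z" and p_r0: "\<not> connected_component (sphere 0 1 - h ` Z) p (h r0)"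
    using exists_point_separated_on_sphere[OF simple closed] unfolding image using on_sphere by blast
  have r_r0: "connected_component (sphere 0 1 - h ` Z) (h r) (h r0)" if "r \<in> realization V E - Z" for r
    using strongly_separatesI[OF assms(1-7) that[unfolded Z_def] r0] not_separating
    unfolding Z_def by blast
  have sep: "\<not> connected_component (sphere 0 1 - h ` Z) (h r) p" if r: "r \<in> realization V E - Z" for r
  proof
    assume "connected_component (sphere 0 1 - h ` Z) (h r) p"
    then have "connected_component (sphere 0 1 - h ` Z) p (h r0)"
      using connected_component_sym connected_component_trans r_r0[OF r] by meson
    then show False
      using p_r0 by contradiction
  qed
  have "p \<notin> h ` (realization V E - Z)"
    using sep p(1) by force
  then have "p \<notin> h ` realization V E"
    using p(1) by blast
  then show thesis
    using that p(1) sep unfolding Z_def by blast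
qed

end

section \<open>Projecting the complex to the plane\<close>

locale planar_projection = sphere_embedded_complex +
  fixes p :: "real^3" and \<phi> :: "real^3 \<Rightarrow> complex" and \<psi> :: "complex \<Rightarrow> real^3"
  assumes projection: "homeomorphism (sphere 0 1 - {p}) UNIV \<phi> \<psi>"
    and pole_on_sphere: "p \<in> sphere 0 1" and pole_off_complex: "p \<notin> h ` realization V E"
begin

lemma complex_avoids_pole: "h ` realization V E \<subseteq> sphere 0 1 - {p}"
  using embedding_in_sphere pole_off_complex by blast

lemma continuous_on_projection: "continuous_on (realization V E) (\<phi> \<circ> h)"
proof -
  have "continuous_on (sphere 0 1 - {p}) \<phi>"
    using projection by (simp add: homeomorphism_def)
  then show ?thesis
    using complex_avoids_pole continuous_on_embedding by (intro continuous_on_compose) (auto intro: continuous_on_subset)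
qed

lemma inj_on_projection: "inj_on (\<phi> \<circ> h) (realization V E)"
proof -
  have "inj_on \<phi> (sphere 0 1 - {p})"
    using projection by (auto simp: homeomorphism_def intro: inj_on_inverseI)
  then show ?thesis
    using complex_avoids_pole inj_on_embedding by (intro comp_inj_on) (auto intro: inj_on_subset)
qed

lemma compact_projection_square:
  assumes "E a u" "E u b" "E b w" "E w a"
  shows "compact ((\<phi> \<circ> h) ` (two_edges a u b \<union> two_edges a w b))"
  using square_subset_realization[OF assms] continuous_on_projection
  by (intro compact_continuous_image compact_Un compact_two_edges) (auto intro: continuous_on_subset)

lemma connected_inside_projection_square:
  assumes "distinct [a, b, u, w]" and edges: "E a u" "E u b" "E b w" "E w a"
  shows "connected (inside ((\<phi> \<circ> h) ` (two_edges a u b \<union> two_edges a w b)))"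
proof -
  have "simple_path ((\<phi> \<circ> h) \<circ> square_loop a u b w)"
    using assms(1) square_subset_realization[OF edges] continuous_on_projection inj_on_projection
    by (intro simple_path_continuous_image simple_path_square_loop)
       (auto simp: path_image_square_loop intro: continuous_on_subset inj_on_subset)
  then show ?thesis
    using Jordan_inside_outside[of "(\<phi> \<circ> h) \<circ> square_loop a u b w"]
    by (simp add: path_image_compose pathstart_compose pathfinish_compose path_image_square_loop square_loop_closed)
qed

lemma inside_filled_square_subset_diamond:
  assumes "distinct [a, u, b, w]" and edges: "E a u" "E a w" "E u w" "E b u" "E b w"
  shows "inside ((\<phi> \<circ> h) ` (two_edges a u b \<union> two_edges a w b)) \<subseteq>
    ((\<phi> \<circ> h) \<circ> diamond_point a u b w) ` diamond"
proof (rule inside_subset_image_diamond)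
  let ?Z = "two_edges a u b \<union> two_edges a w b"
  have ZR: "?Z \<subseteq> realization V E"
    using edges by (intro square_subset_realization) (auto intro: edge_sym)
  have DR: "diamond_point a u b w ` closed_diamond \<subseteq> realization V E"
    using diamond_point_in_realization[OF assms(1) _ graph edges] by blast
  show "continuous_on closed_diamond ((\<phi> \<circ> h) \<circ> diamond_point a u b w)"
    by (rule continuous_on_compose[OF continuous_on_diamond_point[OF assms(1)]
          continuous_on_subset[OF continuous_on_projection DR]])
  show "inj_on ((\<phi> \<circ> h) \<circ> diamond_point a u b w) closed_diamond"
    by (rule comp_inj_on[OF inj_on_diamond_point[OF assms(1)] inj_on_subset[OF inj_on_projection DR]])
  show "((\<phi> \<circ> h) \<circ> diamond_point a u b w) ` (closed_diamond - diamond) \<subseteq> (\<phi> \<circ> h) ` ?Z"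
    using diamond_point_boundary[OF assms(1)] by (auto simp: image_comp[symmetric])
  show "((\<phi> \<circ> h) \<circ> diamond_point a u b w) ` diamond \<inter> (\<phi> \<circ> h) ` ?Z = {}"
  proof (rule equals0I)
    fix y assume "y \<in> ((\<phi> \<circ> h) \<circ> diamond_point a u b w) ` diamond \<inter> (\<phi> \<circ> h) ` ?Z"
    then obtain z s where z: "z \<in> diamond" and s: "s \<in> ?Z"
      and eq: "(\<phi> \<circ> h) (diamond_point a u b w z) = (\<phi> \<circ> h) s"
      by auto
    have "diamond_point a u b w z \<in> realization V E"
      using DR z diamond_subset_closed_diamond by blast
    then have "diamond_point a u b w z = s"
      using inj_onD[OF inj_on_projection eq] s ZR by blast
    then show False
      using diamond_point_notin_square[OF assms(1) z] s by simp
  qed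
  show "compact ((\<phi> \<circ> h) ` ?Z)"
    using edges by (intro compact_projection_square) (auto intro: edge_sym)
  show "connected (inside ((\<phi> \<circ> h) ` ?Z))"
    using assms(1) edges by (intro connected_inside_projection_square) (auto intro: edge_sym)
qed

lemma vertex_not_inside_filled_square:
  assumes "distinct [a, u, b, w, v]" "v \<in> V"
    and edges: "E a u" "E a w" "E u w" "E b u" "E b w"
  shows "(\<phi> \<circ> h) (vertex_point v) \<notin> inside ((\<phi> \<circ> h) ` (two_edges a u b \<union> two_edges a w b))"
proof
  have distinct: "distinct [a, u, b, w]"
    using assms(1) by auto
  assume "(\<phi> \<circ> h) (vertex_point v) \<in> inside ((\<phi> \<circ> h) ` (two_edges a u b \<union> two_edges a w b))"
  then obtain z where z: "z \<in> diamond" "(\<phi> \<circ> h) (vertex_point v) = (\<phi> \<circ> h) (diamond_point a u b w z)"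
    using inside_filled_square_subset_diamond[OF distinct edges] by auto
  moreover have "diamond_point a u b w z \<in> realization V E"
    using diamond_point_in_realization[OF distinct _ graph edges] z(1) diamond_subset_closed_diamond by blast
  ultimately have "vertex_point v = diamond_point a u b w z"
    using inj_onD[OF inj_on_projection] vertex_point_in_realization[OF assms(2)] by blast
  moreover have "u \<noteq> v"
    using assms(1) by auto
  ultimately have "diamond_point a u b w z $ u = 0"
    by (metis vertex_point_nth)
  then show False
    using diamond_point_pos[OF distinct z(1)] by simp
qed

lemma inside_projected_square_if_separated_from_pole:
  assumes edges: "E a u" "E u b" "E b w" "E w a"
    and r: "r \<in> realization V E - (two_edges a u b \<union> two_edges a w b)"
    and separated: "\<not> connected_component (sphere 0 1 - h ` (two_edges a u b \<union> two_edges a w b)) (h r) p"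
  shows "(\<phi> \<circ> h) r \<in> inside ((\<phi> \<circ> h) ` (two_edges a u b \<union> two_edges a w b))"
proof (rule ccontr)
  let ?Z = "two_edges a u b \<union> two_edges a w b"
  have ZR: "?Z \<subseteq> realization V E"
    by (rule square_subset_realization[OF edges])
  assume "(\<phi> \<circ> h) r \<notin> inside ((\<phi> \<circ> h) ` ?Z)"
  moreover have "(\<phi> \<circ> h) r \<notin> (\<phi> \<circ> h) ` ?Z"
    using r ZR inj_on_image_mem_iff[OF inj_on_projection] by blast
  ultimately have "(\<phi> \<circ> h) r \<in> outside ((\<phi> \<circ> h) ` ?Z)"
    using inside_Un_outside[of "(\<phi> \<circ> h) ` ?Z"] by blast
  then have "\<phi> (h r) \<in> outside (\<phi> ` h ` ?Z)"
    by (simp add: image_comp)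
  moreover have "h ` ?Z \<subseteq> sphere 0 1 - {p}" "compact (\<phi> ` h ` ?Z)" "h r \<in> sphere 0 1 - {p}"
    using ZR r complex_avoids_pole compact_projection_square[OF edges] by (auto simp: image_comp)
  ultimately have "connected_component (sphere 0 1 - h ` ?Z) (h r) p"
    by (intro connected_component_pole_if_outside[OF projection pole_on_sphere])
  then show False
    using separated by contradiction
qed

lemma strongly_separates_if_inside_and_outside:
  assumes "distinct [a, u, b, w]"
    and edges: "E a u" "E u b" "E b w" "E w a" and diagonals: "\<not> E a b" "\<not> E u w"
    and r: "r \<in> realization V E - (two_edges a u b \<union> two_edges a w b)"
    and s: "s \<in> realization V E - (two_edges a u b \<union> two_edges a w b)"
    and r_inside: "(\<phi> \<circ> h) r \<in> inside ((\<phi> \<circ> h) ` (two_edges a u b \<union> two_edges a w b))"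
    and s_not_inside: "(\<phi> \<circ> h) s \<notin> inside ((\<phi> \<circ> h) ` (two_edges a u b \<union> two_edges a w b))"
  shows "strongly_separates V E h {a, u, b, w}"
proof (rule strongly_separatesI[OF assms(1-7) r s])
  define Z where "Z = two_edges a u b \<union> two_edges a w b"
  have ZR: "Z \<subseteq> realization V E"
    unfolding Z_def by (rule square_subset_realization[OF edges])
  have J: "h ` Z \<subseteq> sphere 0 1 - {p}" "compact (\<phi> ` h ` Z)"
    using ZR complex_avoids_pole compact_projection_square[OF edges]
    by (auto simp: Z_def image_comp)
  have phi_psi: "\<And>y. \<phi> (\<psi> y) = y"
    using projection by (simp add: homeomorphism_def)
  have "h s \<notin> \<psi> ` inside (\<phi> ` h ` Z)"
    using s_not_inside phi_psi by (auto simp: Z_def image_comp)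
  then show "\<not> connected_component (sphere 0 1 - h ` Z) (h r) (h s)"
    using r s r_inside complex_avoids_pole embedding_notin_image[OF _ ZR]
    by (intro not_connected_component_across_inside[OF projection J]) (auto simp: Z_def image_comp)
qed

text \<open>If u w is an edge the square is filled and has no vertex inside; otherwise it is induced and
  separates v from x.\<close>

lemma separating_square_if_vertices_on_both_sides:
  assumes "distinct [a, u, b, w, v, x]" "v \<in> V" "x \<in> V"
    and edges: "E a u" "E b u" "E a w" "E b w" "\<not> E a b"
    and v_inside: "(\<phi> \<circ> h) (vertex_point v) \<in> inside ((\<phi> \<circ> h) ` (two_edges a u b \<union> two_edges a w b))"
    and x_not_inside: "(\<phi> \<circ> h) (vertex_point x) \<notin> inside ((\<phi> \<circ> h) ` (two_edges a u b \<union> two_edges a w b))"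
  shows "\<exists>C. C \<subseteq> V \<and> induced_4cycle E C \<and> strongly_separates V E h C"
proof (cases "E u w")
  case True
  then show ?thesis
    using vertex_not_inside_filled_square[OF _ assms(2) edges(1,3) True edges(2,4)] assms(1) v_inside
    by simp
next
  case False
  have square: "{a, u, b, w} \<subseteq> V" "induced_4cycle E {a, u, b, w}"
    using assms(1) edges False graph edge_sym unfolding induced_4cycle_def simple_graph_def
    by (blast, metis distinct_length_2_or_more)
  have "vertex_point y \<in> realization V E - (two_edges a u b \<union> two_edges a w b)"
    if "y \<in> V" "y \<notin> {a, u, b, w}" for y
    using that vertex_point_in_realization vertex_point_in_two_edges_iff by fastforce
  then have "strongly_separates V E h {a, u, b, w}"
    using assms(1-3) edges False
    by (intro strongly_separates_if_inside_and_outside[OF _ _ _ _ _ _ _ _ _ v_inside x_not_inside])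
       (auto intro: edge_sym)
  then show ?thesis
    using square by blast
qed

lemma projected_two_edge_arc:
  assumes "distinct [a, c, b]" "E a c" "E c b"
  shows "arc ((\<phi> \<circ> h) \<circ> two_edge_arc a c b)"
    "path_image ((\<phi> \<circ> h) \<circ> two_edge_arc a c b) = (\<phi> \<circ> h) ` two_edges a c b"
    "pathstart ((\<phi> \<circ> h) \<circ> two_edge_arc a c b) = (\<phi> \<circ> h) (vertex_point a)"
    "pathfinish ((\<phi> \<circ> h) \<circ> two_edge_arc a c b) = (\<phi> \<circ> h) (vertex_point b)"
proof -
  have "two_edges a c b \<subseteq> realization V E"
    by (rule two_edges_subset_realization[OF graph assms(2,3)])
  then show "arc ((\<phi> \<circ> h) \<circ> two_edge_arc a c b)"
    using continuous_on_projection inj_on_projection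
    by (intro arc_continuous_image arc_two_edge_arc assms(1)) (auto intro: continuous_on_subset inj_on_subset)
qed (simp_all add: path_image_compose pathstart_compose pathfinish_compose)

lemma projected_two_edges_Int:
  assumes "distinct [a, b, u, w]" and edges: "E a u" "E u b" "E b w" "E w a"
  shows "(\<phi> \<circ> h) ` two_edges a u b \<inter> (\<phi> \<circ> h) ` two_edges a w b =
         {(\<phi> \<circ> h) (vertex_point a), (\<phi> \<circ> h) (vertex_point b)}"
proof -
  have "(\<phi> \<circ> h) ` two_edges a u b \<inter> (\<phi> \<circ> h) ` two_edges a w b =
        (\<phi> \<circ> h) ` (two_edges a u b \<inter> two_edges a w b)"
    using inj_on_subset[OF inj_on_projection square_subset_realization[OF edges]]
    by (rule inj_on_image_Int[symmetric]) auto
  then show ?thesis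
    by (simp add: two_edges_Int[OF assms(1)])
qed

lemma inside_projected_theta:
  assumes "distinct [a, b, c1, c2, c3]"
    and edges: "E a c1" "E b c1" "E a c2" "E b c2" "E a c3" "E b c3"
    and c3_inside: "(\<phi> \<circ> h) (vertex_point c3) \<in> inside ((\<phi> \<circ> h) ` (two_edges a c1 b \<union> two_edges a c2 b))"
  shows "inside ((\<phi> \<circ> h) ` (two_edges a c1 b \<union> two_edges a c3 b)) \<union>
      inside ((\<phi> \<circ> h) ` (two_edges a c2 b \<union> two_edges a c3 b)) \<union>
      ((\<phi> \<circ> h) ` two_edges a c3 b - {(\<phi> \<circ> h) (vertex_point a), (\<phi> \<circ> h) (vertex_point b)}) =
      inside ((\<phi> \<circ> h) ` (two_edges a c1 b \<union> two_edges a c2 b))"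
proof -
  let ?f = "\<phi> \<circ> h"
  have reversed: "E c1 b" "E c2 b" "E c3 b" "E c1 a" "E c2 a" "E c3 a"
    using edges edge_sym by auto
  have "distinct [a, c1, b]" "distinct [a, c2, b]" "distinct [a, c3, b]"
    "distinct [a, b, c1, c2]" "distinct [a, b, c1, c3]" "distinct [a, b, c2, c3]"
    using assms(1) by auto
  note arc1 = projected_two_edge_arc[OF this(1) edges(1) reversed(1)]
    and arc2 = projected_two_edge_arc[OF this(2) edges(3) reversed(2)]
    and arc3 = projected_two_edge_arc[OF this(3) edges(5) reversed(3)]
    and Int12 = projected_two_edges_Int[OF this(4) edges(1) reversed(1) edges(4) reversed(5)]
    and Int13 = projected_two_edges_Int[OF this(5) edges(1) reversed(1) edges(6) reversed(6)]
    and Int23 = projected_two_edges_Int[OF this(6) edges(3) reversed(2) edges(6) reversed(6)]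
  have "vertex_point a \<noteq> vertex_point b" "vertex_point a \<in> realization V E" "vertex_point b \<in> realization V E"
    using assms(1) edges graph by (auto intro: vertex_point_in_realization simp: simple_graph_def)
  then have ab: "?f (vertex_point a) \<noteq> ?f (vertex_point b)"
    using inj_on_projection by (metis inj_on_def)
  have "?f (vertex_point c3) \<in> ?f ` two_edges a c3 b"
    by simp
  then have "path_image (?f \<circ> two_edge_arc a c3 b) \<inter>
      inside (path_image (?f \<circ> two_edge_arc a c1 b) \<union> path_image (?f \<circ> two_edge_arc a c2 b)) \<noteq> {}"
    using c3_inside unfolding arc1(2) arc2(2) arc3(2) image_Un by blast
  then obtain split: "inside (path_image (?f \<circ> two_edge_arc a c1 b) \<union> path_image (?f \<circ> two_edge_arc a c3 b)) \<union>
      inside (path_image (?f \<circ> two_edge_arc a c2 b) \<union> path_image (?f \<circ> two_edge_arc a c3 b)) \<union>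
      (path_image (?f \<circ> two_edge_arc a c3 b) - {?f (vertex_point a), ?f (vertex_point b)}) =
      inside (path_image (?f \<circ> two_edge_arc a c1 b) \<union> path_image (?f \<circ> two_edge_arc a c2 b))"
    by (rule split_inside_simple_closed_curve[OF arc_imp_simple_path[OF arc1(1)] arc1(3,4)
          arc_imp_simple_path[OF arc2(1)] arc2(3,4) arc_imp_simple_path[OF arc3(1)] arc3(3,4) ab
          Int12[folded arc1(2) arc2(2)] Int13[folded arc1(2) arc3(2)] Int23[folded arc2(2) arc3(2)]])
  then show ?thesis
    unfolding arc1(2) arc2(2) arc3(2) image_Un .
qed

text \<open>The vertex v lies in one of the two faces of the split, and the opposite vertex c2 or c1 does
  not.\<close>

lemma separating_square_if_inside_theta:
  assumes "distinct [a, b, c1, c2, c3, v]" "v \<in> V"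
    and edges: "\<not> E a b" "E a c1" "E b c1" "E a c2" "E b c2" "E a c3" "E b c3"
    and inside: "(\<phi> \<circ> h) (vertex_point c3) \<in> inside ((\<phi> \<circ> h) ` (two_edges a c1 b \<union> two_edges a c2 b))"
      "(\<phi> \<circ> h) (vertex_point v) \<in> inside ((\<phi> \<circ> h) ` (two_edges a c1 b \<union> two_edges a c2 b))"
  shows "\<exists>C. C \<subseteq> V \<and> induced_4cycle E C \<and> strongly_separates V E h C"
proof -
  let ?f = "\<phi> \<circ> h"
  let ?K = "\<lambda>c d. inside (?f ` (two_edges a c b \<union> two_edges a d b))"
  have split: "?K c1 c3 \<union> ?K c2 c3 \<union> (?f ` two_edges a c3 b - {?f (vertex_point a), ?f (vertex_point b)}) =
      ?K c1 c2"
    using assms(1) by (intro inside_projected_theta edges(2-7) inside(1)) auto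
  have "vertex_point v \<notin> two_edges a c3 b"
    using assms(1) by (auto simp: vertex_point_in_two_edges_iff)
  then have "?f (vertex_point v) \<notin> ?f ` two_edges a c3 b"
    using inj_on_image_mem_iff[OF inj_on_projection] vertex_point_in_realization[OF assms(2)]
      two_edges_subset_realization[OF graph edges(6) edge_sym[OF edges(7)]] by blast
  then consider "?f (vertex_point v) \<in> ?K c1 c3" | "?f (vertex_point v) \<in> ?K c2 c3"
    using inside(2) split by blast
  moreover have opposite: "?f (vertex_point c) \<notin> ?K c1 c3 \<union> ?K c2 c3" if "c \<in> {c1, c2}" for c
  proof -
    have "?f (vertex_point c) \<in> ?f ` (two_edges a c1 b \<union> two_edges a c2 b)"
      using that by auto
    then show ?thesis
      using split inside_no_overlap[of "?f ` (two_edges a c1 b \<union> two_edges a c2 b)"] by blast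
  qed
  moreover have "c1 \<in> V" "c2 \<in> V"
    using graph edges(2,4) by (auto simp: simple_graph_def)
  ultimately show ?thesis
  proof cases
    case 1
    then show ?thesis
      using assms(1,2) edges \<open>c2 \<in> V\<close> opposite[of c2]
      by (intro separating_square_if_vertices_on_both_sides[of a c1 b c3 v c2]) auto
  next
    case 2
    then show ?thesis
      using assms(1,2) edges \<open>c1 \<in> V\<close> opposite[of c1]
      by (intro separating_square_if_vertices_on_both_sides[of a c2 b c3 v c1]) auto
  qed
qed

end

section \<open>Special and CFS graphs\<close>

lemma induced_4cycleI:
  assumes "distinct [p, q, r, s]" "E p q" "E q r" "E r s" "E s p" "\<not> E p r" "\<not> E q s"
  shows "induced_4cycle E {p, q, r, s}"
  unfolding induced_4cycle_def using assms by blast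

lemma specialI:
  assumes "distinct [a, b, c1, c2, c3]" "\<not> E a b"
    and "E a c1" "E b c1" "E a c2" "E b c2" "E a c3" "E b c3" "\<not> E c1 c2"
  shows "special {a, b, c1, c2, c3} E"
  unfolding special_def using assms by blast

lemma specialE:
  assumes "special W E"
  obtains a b c1 c2 c3 where "W = {a, b, c1, c2, c3}" "distinct [a, b, c1, c2, c3]" "\<not> E a b"
    "E a c1" "E b c1" "E a c2" "E b c2" "E a c3" "E b c3" "\<not> E c1 c2"
proof -
  obtain a b c1 c2 c3 where W: "W = {a, b, c1, c2, c3}" "distinct [a, b, c1, c2, c3]" "\<not> E a b"
    "\<forall>c\<in>{c1, c2, c3}. E a c \<and> E b c" "\<not> (E c1 c2 \<and> E c2 c3 \<and> E c1 c3)"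
    using assms unfolding special_def by blast
  consider "\<not> E c1 c2" | "\<not> E c2 c3" | "\<not> E c1 c3"
    using W(5) by blast
  then show thesis
  proof cases
    case 1
    then show thesis using that[of a b c1 c2 c3] W by auto
  next
    case 2
    then show thesis using that[of a b c2 c3 c1] W by auto
  next
    case 3
    then show thesis using that[of a b c1 c3 c2] W by auto
  qed
qed

lemma induced_4cycle_opposite:
  assumes sym: "\<And>x y. E x y \<Longrightarrow> E y x" and "induced_4cycle E D"
    and "s \<in> D" "t \<in> D" "s \<noteq> t" "\<not> E s t"
  obtains m n where "D = {s, t, m, n}" "distinct [s, t, m, n]"
    "E s m" "E t m" "E s n" "E t n" "\<not> E m n"
proof -
  obtain p q r w where D: "D = {p, q, r, w}" "distinct [p, q, r, w]"
    "E p q" "E q r" "E r w" "E w p" "\<not> E p r" "\<not> E q w"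
    using assms(2) unfolding induced_4cycle_def by blast
  then have "{s, t} = {p, r} \<or> {s, t} = {q, w}"
    using assms(3-6) sym by auto
  then show thesis
  proof
    assume "{s, t} = {p, r}"
    then show thesis
      using that[of q w] D sym by (auto simp: doubleton_eq_iff)
  next
    assume "{s, t} = {q, w}"
    then show thesis
      using that[of p r] D sym by (auto simp: doubleton_eq_iff)
  qed
qed

lemma CFSI:
  assumes "\<Omega> \<union> K = V" "\<Omega> \<inter> K = {}" "clique E K" "\<forall>u\<in>\<Omega>. \<forall>k\<in>K. E u k"
    and "C0 \<subseteq> \<Omega>" "induced_4cycle E C0" "\<And>v. v \<in> \<Omega> \<Longrightarrow> \<exists>C. (adj4 \<Omega> E)\<^sup>*\<^sup>* C0 C \<and> v \<in> C"
  shows "CFS V E"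
proof -
  have "\<Omega> \<noteq> {}"
    using assms(5,6) by (auto simp: induced_4cycle_def)
  then show ?thesis
    unfolding CFS_def using assms
    by (intro exI[of _ \<Omega>] exI[of _ K] conjI exI[of _ C0] ballI assms(7)) simp_all
qed

text \<open>With c1 c2 non-adjacent, the square a c1 b c2 covers every vertex but c3; if c3 misses c1 or
  c2 the square a c b c3 is adjacent to it, and otherwise c3 is a cone vertex.\<close>

lemma special_imp_CFS:
  assumes sym: "\<And>x y. E x y \<Longrightarrow> E y x" and "special V E"
  shows "CFS V E"
proof -
  obtain a b c1 c2 c3 where V: "V = {a, b, c1, c2, c3}" "distinct [a, b, c1, c2, c3]" "\<not> E a b"
    and edges: "E a c1" "E b c1" "E a c2" "E b c2" "E a c3" "E b c3" and "\<not> E c1 c2"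
    using assms(2) by (rule specialE)
  have reversed: "E c1 a" "E c1 b" "E c2 a" "E c2 b" "E c3 a" "E c3 b"
    using edges by (auto intro: sym)
  have C0: "induced_4cycle E {a, c1, b, c2}"
    using V edges reversed \<open>\<not> E c1 c2\<close> by (intro induced_4cycleI) auto
  show ?thesis
  proof (cases "E c1 c3 \<and> E c2 c3")
    case True
    show ?thesis
    proof (rule CFSI[of "{a, b, c1, c2}" "{c3}" _ _ "{a, c1, b, c2}"])
      fix v assume "v \<in> {a, b, c1, c2}"
      then show "\<exists>C. (adj4 {a, b, c1, c2} E)\<^sup>*\<^sup>* {a, c1, b, c2} C \<and> v \<in> C"
        by blast
    qed (use V edges reversed True C0 in \<open>auto simp: clique_def\<close>)
  next
    case False
    then obtain c where c: "c \<in> {c1, c2}" "\<not> E c c3"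
      by blast
    have "induced_4cycle E {a, c, b, c3}"
      using V edges reversed c by (intro induced_4cycleI) auto
    then have "adj4 V E {a, c1, b, c2} {a, c, b, c3}"
      unfolding adj4_def using C0 V c by auto
    show ?thesis
    proof (rule CFSI[of V "{}" _ _ "{a, c1, b, c2}"])
      fix v assume "v \<in> V"
      show "\<exists>C. (adj4 V E)\<^sup>*\<^sup>* {a, c1, b, c2} C \<and> v \<in> C"
      proof (cases "v = c3")
        case True
        then show ?thesis
          using \<open>adj4 V E {a, c1, b, c2} {a, c, b, c3}\<close> by blast
      next
        case False
        then show ?thesis
          using \<open>v \<in> V\<close> V(1) by blast
      qed
    qed (use V C0 in \<open>auto simp: clique_def\<close>)
  qed
qed

text \<open>Two adjacent squares share a diagonal s t; a vertex of the second square off the first one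
  suspends, together with the first square, a special subgraph over s and t.\<close>

lemma adjacent_squares_contain_special:
  assumes sym: "\<And>x y. E x y \<Longrightarrow> E y x" and "adj4 \<Omega> E C D"
  shows "\<exists>W. W \<subseteq> C \<union> D \<and> special W E"
proof -
  obtain s t where C: "induced_4cycle E C" and D: "induced_4cycle E D" "C \<noteq> D"
    and st: "s \<in> C \<inter> D" "t \<in> C \<inter> D" "s \<noteq> t" "\<not> E s t"
    using assms(2) unfolding adj4_def by blast
  obtain x y where C_split: "C = {s, t, x, y}" "distinct [s, t, x, y]"
    "E s x" "E t x" "E s y" "E t y" "\<not> E x y"
    using induced_4cycle_opposite[OF sym C] st by blast
  obtain m n where "D = {s, t, m, n}" "distinct [s, t, m, n]" "E s m" "E t m" "E s n" "E t n"
    using induced_4cycle_opposite[OF sym D(1)] st by blast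
  moreover from this have "m \<notin> {x, y} \<or> n \<notin> {x, y}"
    using C_split(1,2) D(2) by auto
  ultimately obtain z where z: "z \<in> D" "z \<notin> {s, t, x, y}" "E s z" "E t z"
    by auto
  have "special {s, t, x, y, z} E"
    using C_split z st(4) by (intro specialI) auto
  moreover have "{s, t, x, y, z} \<subseteq> C \<union> D"
    using C_split(1) z(1) by auto
  ultimately show ?thesis
    by blast
qed

text \<open>If the square C0 has no neighbour in \<Omega>^4, then \<Omega> = C0, and the clique K is nonempty since
  the graph is not a square; a vertex of K suspends C0.\<close>

lemma CFS_imp_special_subset:
  assumes sym: "\<And>x y. E x y \<Longrightarrow> E y x" and "CFS V E" and "\<not> induced_4cycle E V"
  shows "\<exists>W. W \<subseteq> V \<and> special W E"
proof -
  obtain \<Omega> K C0 where \<Omega>: "\<Omega> \<union> K = V" "\<Omega> \<inter> K = {}" "\<forall>u\<in>\<Omega>. \<forall>k\<in>K. E u k"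
    "C0 \<subseteq> \<Omega>" "induced_4cycle E C0" "\<forall>v\<in>\<Omega>. \<exists>C. (adj4 \<Omega> E)\<^sup>*\<^sup>* C0 C \<and> v \<in> C"
    using assms(2) unfolding CFS_def by blast
  show ?thesis
  proof (cases "\<exists>D. adj4 \<Omega> E C0 D")
    case True
    then obtain D where D: "adj4 \<Omega> E C0 D"
      by blast
    then have "C0 \<union> D \<subseteq> V"
      using \<Omega>(1,4) by (auto simp: adj4_def)
    then show ?thesis
      using adjacent_squares_contain_special[OF sym D] by (meson subset_trans)
  next
    case False
    have isolated: "C = C0" if "(adj4 \<Omega> E)\<^sup>*\<^sup>* C0 C" for C
      using that False by (cases rule: converse_rtranclpE) auto
    have "\<Omega> \<subseteq> C0"
    proof
      fix v assume "v \<in> \<Omega>"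
      then obtain C where "(adj4 \<Omega> E)\<^sup>*\<^sup>* C0 C" "v \<in> C"
        using \<Omega>(6) by blast
      then show "v \<in> C0"
        using isolated by blast
    qed
    then have "\<Omega> = C0"
      using \<Omega>(4) by (rule subset_antisym)
    have "K \<noteq> {}"
    proof
      assume "K = {}"
      then have "V = C0"
        using \<Omega>(1) \<open>\<Omega> = C0\<close> by simp
      then show False
        using assms(3) \<Omega>(5) by simp
    qed
    then obtain k where k: "k \<in> K" "k \<notin> C0"
      using \<Omega>(2) \<open>\<Omega> = C0\<close> by blast
    obtain p q r w where C0: "C0 = {p, q, r, w}" "distinct [p, q, r, w]"
      "E p q" "E q r" "E r w" "E w p" "\<not> E p r" "\<not> E q w"
      using \<Omega>(5) unfolding induced_4cycle_def by blast
    have "special {p, r, q, w, k} E"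
      using C0 k \<Omega>(3) \<open>\<Omega> = C0\<close> sym[OF C0(4)] sym[OF C0(6)] by (intro specialI) auto
    moreover have "{p, r, q, w, k} \<subseteq> V"
      using C0(1) \<Omega>(1,4) k by auto
    ultimately show ?thesis
      by blast
  qed
qed

context sphere_embedded_complex
begin

lemma exists_projection_enclosing_complex:
  assumes "distinct [a, u, b, w]"
    and edges: "E a u" "E u b" "E b w" "E w a" and diagonals: "\<not> E a b" "\<not> E u w"
    and not_separating: "\<not> strongly_separates V E h {a, u, b, w}"
    and r0: "r0 \<in> realization V E - (two_edges a u b \<union> two_edges a w b)"
  obtains p \<phi> \<psi> where "planar_projection V E h p \<phi> \<psi>"
    "\<And>r. r \<in> realization V E - (two_edges a u b \<union> two_edges a w b) \<Longrightarrow>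
       (\<phi> \<circ> h) r \<in> inside ((\<phi> \<circ> h) ` (two_edges a u b \<union> two_edges a w b))"
proof -
  obtain p where p: "p \<in> sphere 0 1" "p \<notin> h ` realization V E"
    and separated: "\<And>r. r \<in> realization V E - (two_edges a u b \<union> two_edges a w b) \<Longrightarrow>
      \<not> connected_component (sphere 0 1 - h ` (two_edges a u b \<union> two_edges a w b)) (h r) p"
    using exists_pole_off_complex[OF assms] by blast
  obtain \<phi> :: "real^3 \<Rightarrow> complex" and \<psi> where "homeomorphism (sphere 0 1 - {p}) UNIV \<phi> \<psi>"
    using punctured_sphere_homeomorphic_complex[OF p(1)] by blast
  then interpret planar_projection V E h p \<phi> \<psi>
    using p by unfold_locales
  show thesis
  proof (rule that[OF planar_projection_axioms])
    fix r assume r: "r \<in> realization V E - (two_edges a u b \<union> two_edges a w b)"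
    show "(\<phi> \<circ> h) r \<in> inside ((\<phi> \<circ> h) ` (two_edges a u b \<union> two_edges a w b))"
      by (rule inside_projected_square_if_separated_from_pole[OF edges r separated[OF r]])
  qed
qed

lemma special_subset_eq_if_no_separating_square:
  assumes no_separating: "\<nexists>C. C \<subseteq> V \<and> induced_4cycle E C \<and> strongly_separates V E h C"
    and "W \<subseteq> V" "special W E"
  shows "W = V"
proof (rule ccontr)
  assume "W \<noteq> V"
  then obtain v where v: "v \<in> V" "v \<notin> W"
    using assms(2) by blast
  obtain a b c1 c2 c3 where W: "W = {a, b, c1, c2, c3}" "distinct [a, b, c1, c2, c3]" "\<not> E a b"
    and edges: "E a c1" "E b c1" "E a c2" "E b c2" "E a c3" "E b c3" and "\<not> E c1 c2"
    using assms(3) by (rule specialE)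
  have square: "distinct [a, c1, b, c2]" "E a c1" "E c1 b" "E b c2" "E c2 a" "\<not> E a b" "\<not> E c1 c2"
    using W edges \<open>\<not> E c1 c2\<close> by (auto intro: edge_sym)
  have "{a, c1, b, c2} \<subseteq> V" "induced_4cycle E {a, c1, b, c2}"
    using assms(2) W(1) induced_4cycleI[OF square] by auto
  then have not_separating: "\<not> strongly_separates V E h {a, c1, b, c2}"
    using no_separating by blast
  have off_square: "vertex_point x \<in> realization V E - (two_edges a c1 b \<union> two_edges a c2 b)"
    if "x \<in> V" "x \<notin> {a, b, c1, c2}" for x
    using that vertex_point_in_realization by (auto simp: vertex_point_in_two_edges_iff)
  have c3: "c3 \<in> V" "c3 \<notin> {a, b, c1, c2}" and v': "v \<notin> {a, b, c1, c2}"
    using assms(2) W v by auto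
  obtain p \<phi> \<psi> where "planar_projection V E h p \<phi> \<psi>"
    and inside: "\<And>r. r \<in> realization V E - (two_edges a c1 b \<union> two_edges a c2 b) \<Longrightarrow>
      (\<phi> \<circ> h) r \<in> inside ((\<phi> \<circ> h) ` (two_edges a c1 b \<union> two_edges a c2 b))"
    using exists_projection_enclosing_complex[OF square not_separating off_square[OF c3]] by blast
  then interpret planar_projection V E h p \<phi> \<psi>
    by simp
  have "distinct [a, b, c1, c2, c3, v]"
    using W v by auto
  then have "\<exists>C. C \<subseteq> V \<and> induced_4cycle E C \<and> strongly_separates V E h C"
    by (rule separating_square_if_inside_theta[OF _ v(1) W(3) edges
          inside[OF off_square[OF c3]] inside[OF off_square[OF v(1) v']]])
  then show False
    using no_separating by blast
qed

end

theorem lemma4p9: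
  fixes V :: "('v::finite) set" and E :: "'v \<Rightarrow> 'v \<Rightarrow> bool" and h :: "real^'v \<Rightarrow> real^3"
  assumes "simple_graph V E"
    and "sphere_embedding V E h"
    and "prime_complex V E h"
  shows "(\<forall>W. W \<subseteq> V \<and> special W E \<longrightarrow> W = V) \<and> (CFS V E \<longleftrightarrow> special V E)"
proof -
  interpret sphere_embedded_complex V E h
    using assms(1,2) by unfold_locales
  have no_separating: "\<nexists>C. C \<subseteq> V \<and> induced_4cycle E C \<and> strongly_separates V E h C"
    and not_square: "\<not> induced_4cycle E V"
    using assms(3) unfolding prime_complex_def by simp_all
  have maximal: "\<forall>W. W \<subseteq> V \<and> special W E \<longrightarrow> W = V"
    using special_subset_eq_if_no_separating_square[OF no_separating] by blast
  moreover have "CFS V E \<longleftrightarrow> special V E"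
  proof
    assume "CFS V E"
    then obtain W where "W \<subseteq> V" "special W E"
      using CFS_imp_special_subset[OF edge_sym _ not_square] by blast
    then show "special V E"
      using maximal by auto
  qed (rule special_imp_CFS[OF edge_sym])
  ultimately show ?thesis ..
qed

end
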